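(* Let $n\ge1$, $\mathfrak g=sl(n+1,\mathbb C)$, $a\in\mathbb C$ and $m(a)=-\tfrac12(a+n+1)$. Then the map $\rho_a$ defined by $\rho_a(X)=W\big(i\tilde X+\tfrac12 a\varphi_1(X)\big)$ for $X\in\mathfrak g$ is a representation of $\mathfrak g$ on $\mathcal P=\mathbb C[z_1,\dots,z_n]$, and for $f\in\mathcal P$, $1\le k\le n$ and $1\le i\ne j\le n$: $$(\rho_a(H_k)f)(z)=m(a)f(z)-z_k\partial_{z_k}f-\sum_{j=1}^n z_j\partial_{z_j}f,\qquad (\rho_a(E_{1,k+1})f)(z)=-m(a)z_kf(z)+z_k\sum_{j=1}^nz_j\partial_{z_j}f,$$ $$(\rho_a(E_{k+1,1})f)(z)=-\partial_{z_k}f,\qquad (\rho_a(E_{i+1,j+1})f)(z)=-z_j\partial_{z_i}f.$$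
   Context: $E_{ij}$ is the $(n+1)\times(n+1)$ matrix with $1$ in entry $(i,j)$ and $0$ elsewhere, and $H_k=E_{k+1,k+1}-E_{11}$. Let $\Psi(p,q)$ be the $(n+1)\times(n+1)$ matrix whose first row is $(-\sum_j p_jq_j,\ q_1,\dots,q_n)$ and whose $(k+1)$-th row ($1\le k\le n$) is $p_k$ times the first row; for $X\in\mathfrak g$, $\tilde X(p,q)=\operatorname{Tr}(\Psi(p,q)X)\in\mathbb C[p,q]$. The linear map $\varphi_1:\mathfrak g\to\mathbb C[p,q]$ is determined by $\varphi_1(E_{11}-E_{22})=1$, $\varphi_1(E_{kk}-E_{k+1,k+1})=0$ for $k=2,\dots,n$, $\varphi_1(E_{1,k+1})=p_k$ for $k=1,\dots,n$, and $\varphi_1(E_{ij})=0$ for $i\ge2$, $j\neq i$. The Weyl correspondence $W$ sends polynomials in $(p,q)$ to linear operators on polynomials $\varphi(p)$, defined by linearity from $(W(u(p)q^\alpha)\varphi)(p)=(i\partial_s)^\alpha\big(u(p+\tfrac12s)\varphi(p+s)\big)|_{s=0}$ for a polynomial $u$ and $\alpha\in\mathbb N^n$; the resulting operators are regarded as acting on $\mathcal P$ by renaming the variable $p$ as $z$. *)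

theory Defs
  imports Complex_Main "HOL-Library.Poly_Mapping"
begin

text \<open>A polynomial in variables indexed by type 'v is a finitely supported map from
  monomials (finitely supported exponent vectors) to complex coefficients;
  the multiplication of the library type is the convolution product.\<close>

type_synonym 'v mpoly = "('v \<Rightarrow>\<^sub>0 nat) \<Rightarrow>\<^sub>0 complex"

definition Var :: "'v \<Rightarrow> 'v mpoly" where
  "Var v = Poly_Mapping.single (Poly_Mapping.single v 1) 1"

definition Const :: "complex \<Rightarrow> 'v mpoly" where
  "Const c = Poly_Mapping.single 0 c"

definition pd :: "'v \<Rightarrow> 'v mpoly \<Rightarrow> 'v mpoly" where
  "pd v F = (\<Sum>m\<in>Poly_Mapping.keys F.
      Poly_Mapping.single (m - Poly_Mapping.single v (1::nat))
        (Poly_Mapping.lookup F m * of_nat (Poly_Mapping.lookup (m :: 'v \<Rightarrow>\<^sub>0 nat) v)))"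

definition subst :: "('v \<Rightarrow> 'w mpoly) \<Rightarrow> 'v mpoly \<Rightarrow> 'w mpoly" where
  "subst \<sigma> F = (\<Sum>m\<in>Poly_Mapping.keys F. Const (Poly_Mapping.lookup F m) * (\<Prod>v\<in>Poly_Mapping.keys m. \<sigma> v ^ Poly_Mapping.lookup m v))"

text \<open>The representation space P = C[z_1,...,z_n]: polynomials in variables indexed by nat,
  involving only the variables 1..n.\<close>
definition Pspace :: "nat \<Rightarrow> nat mpoly set" where
  "Pspace n = {f. \<forall>m\<in>Poly_Mapping.keys f. Poly_Mapping.keys m \<subseteq> {1..n}}"

text \<open>Polynomials in (p,q): variable Inl k is p_k and Inr k is q_k (k = 1..n).\<close>
abbreviation pv :: "nat \<Rightarrow> (nat + nat) mpoly" where "pv k \<equiv> Var (Inl k)"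
abbreviation qv :: "nat \<Rightarrow> (nat + nat) mpoly" where "qv k \<equiv> Var (Inr k)"

text \<open>Matrices are functions nat => nat => complex with indices 1..n+1 (entries outside are 0).\<close>
type_synonym cmat = "nat \<Rightarrow> nat \<Rightarrow> complex"

definition sl :: "nat \<Rightarrow> cmat set" where
  "sl n = {X. (\<forall>i j. (i \<notin> {1..n+1} \<or> j \<notin> {1..n+1}) \<longrightarrow> X i j = 0)
              \<and> (\<Sum>i=1..n+1. X i i) = 0}"

definition E :: "nat \<Rightarrow> nat \<Rightarrow> cmat" where
  "E i j = (\<lambda>a b. if a = i \<and> b = j then 1 else 0)"

definition madd :: "cmat \<Rightarrow> cmat \<Rightarrow> cmat" where
  "madd X Y = (\<lambda>i j. X i j + Y i j)"

definition msub :: "cmat \<Rightarrow> cmat \<Rightarrow> cmat" where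
  "msub X Y = (\<lambda>i j. X i j - Y i j)"

definition msmult :: "complex \<Rightarrow> cmat \<Rightarrow> cmat" where
  "msmult c X = (\<lambda>i j. c * X i j)"

definition mmult :: "nat \<Rightarrow> cmat \<Rightarrow> cmat \<Rightarrow> cmat" where
  "mmult n X Y = (\<lambda>i j. \<Sum>k=1..n+1. X i k * Y k j)"

definition bracket :: "nat \<Rightarrow> cmat \<Rightarrow> cmat \<Rightarrow> cmat" where
  "bracket n X Y = msub (mmult n X Y) (mmult n Y X)"

definition H :: "nat \<Rightarrow> cmat" where
  "H k = msub (E (k+1) (k+1)) (E 1 1)"

definition Psi_row1 :: "nat \<Rightarrow> nat \<Rightarrow> (nat + nat) mpoly" where
  "Psi_row1 n b = (if b = 1 then - (\<Sum>j=1..n. pv j * qv j)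
                   else if 2 \<le> b \<and> b \<le> n+1 then qv (b - 1) else 0)"

definition Psi :: "nat \<Rightarrow> nat \<Rightarrow> nat \<Rightarrow> (nat + nat) mpoly" where
  "Psi n a b = (if a = 1 then Psi_row1 n b
                else if 2 \<le> a \<and> a \<le> n+1 then pv (a - 1) * Psi_row1 n b else 0)"

definition tilde :: "nat \<Rightarrow> cmat \<Rightarrow> (nat + nat) mpoly" where
  "tilde n X = (\<Sum>a=1..n+1. \<Sum>b=1..n+1. Psi n a b * Const (X b a))"

text \<open>phi_1: the unique linear map on sl(n+1) with the prescribed values on the basis
  (extended by 0 outside sl(n+1), to make it a unique total function).\<close>
definition phi1 :: "nat \<Rightarrow> cmat \<Rightarrow> (nat + nat) mpoly" where
  "phi1 n = (THE \<phi>.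
      (\<forall>X\<in>sl n. \<forall>Y\<in>sl n. \<phi> (madd X Y) = \<phi> X + \<phi> Y)
    \<and> (\<forall>X\<in>sl n. \<forall>c. \<phi> (msmult c X) = Const c * \<phi> X)
    \<and> \<phi> (msub (E 1 1) (E 2 2)) = 1
    \<and> (\<forall>k. 2 \<le> k \<and> k \<le> n \<longrightarrow> \<phi> (msub (E k k) (E (k+1) (k+1))) = 0)
    \<and> (\<forall>k. 1 \<le> k \<and> k \<le> n \<longrightarrow> \<phi> (E 1 (k+1)) = pv k)
    \<and> (\<forall>i j. 2 \<le> i \<and> i \<le> n+1 \<and> 1 \<le> j \<and> j \<le> n+1 \<and> j \<noteq> i \<longrightarrow> \<phi> (E i j) = 0)
    \<and> (\<forall>X. X \<notin> sl n \<longrightarrow> \<phi> X = 0))"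

text \<open>Auxiliary ring: polynomials in (p,s), variable Inl k is p_k, Inr k is s_k.
  (W(u(p) q^alpha) phi)(p) = (i d_s)^alpha (u(p + s/2) phi(p+s)) at s = 0,
  then p renamed to z.  We apply it to monomials u = p^beta and extend linearly.\<close>

definition iDs :: "(nat \<Rightarrow>\<^sub>0 nat) \<Rightarrow> (nat + nat) mpoly \<Rightarrow> (nat + nat) mpoly" where
  "iDs \<alpha> G = foldr (\<lambda>k g. ((\<lambda>h. Const \<i> * pd (Inr k) h) ^^ Poly_Mapping.lookup \<alpha> k) g)
                   (sorted_list_of_set (Poly_Mapping.keys \<alpha>)) G"

definition Wmon :: "(nat \<Rightarrow>\<^sub>0 nat) \<Rightarrow> (nat \<Rightarrow>\<^sub>0 nat) \<Rightarrow> nat mpoly \<Rightarrow> nat mpoly" where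
  "Wmon \<beta> \<alpha> f =
     (let u_shift = (\<Prod>k\<in>Poly_Mapping.keys \<beta>. (Var (Inl k) + Const (1/2) * Var (Inr k)) ^ Poly_Mapping.lookup \<beta> k);
          f_shift = subst (\<lambda>k. Var (Inl k) + Var (Inr k)) f
      in subst (\<lambda>v. case v of Inl k \<Rightarrow> Var k | Inr k \<Rightarrow> 0) (iDs \<alpha> (u_shift * f_shift)))"

definition ppart :: "((nat + nat) \<Rightarrow>\<^sub>0 nat) \<Rightarrow> (nat \<Rightarrow>\<^sub>0 nat)" where
  "ppart m = Abs_poly_mapping (\<lambda>k. Poly_Mapping.lookup m (Inl k))"
definition qpart :: "((nat + nat) \<Rightarrow>\<^sub>0 nat) \<Rightarrow> (nat \<Rightarrow>\<^sub>0 nat)" where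
  "qpart m = Abs_poly_mapping (\<lambda>k. Poly_Mapping.lookup m (Inr k))"

definition W :: "(nat + nat) mpoly \<Rightarrow> nat mpoly \<Rightarrow> nat mpoly" where
  "W F f = (\<Sum>m\<in>Poly_Mapping.keys F. Const (Poly_Mapping.lookup F m) * Wmon (ppart m) (qpart m) f)"

definition rho :: "nat \<Rightarrow> complex \<Rightarrow> cmat \<Rightarrow> nat mpoly \<Rightarrow> nat mpoly" where
  "rho n a X = W (Const \<i> * tilde n X + Const (a/2) * phi1 n X)"

definition mA :: "nat \<Rightarrow> complex \<Rightarrow> complex" where
  "mA n a = - (a + of_nat n + 1) / 2"

end

theory Submission
  imports Defs
begin

text \<open>Write \<open>l\<^sub>r(z)\<close> for the \<open>r\<close>-th entry of \<open>X\<close> applied to the homogeneous coordinates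
  \<open>(1, z\<^sub>1, ..., z\<^sub>n)\<close>, and \<open>g\<^sub>j = z\<^sub>j l\<^sub>1 - l\<^sub>j\<^sub>+\<^sub>1\<close>. The symbol of \<open>\<rho>\<^sub>a(X)\<close> has degree at most
  one in \<open>q\<close>: \<open>tilde X = - \<Sum>\<^sub>j g\<^sub>j(p) q\<^sub>j\<close> and \<open>\<phi>\<^sub>1(X) = l\<^sub>1(p)\<close>. The Weyl correspondence sends \<open>u(p)\<close>
  to multiplication by \<open>u\<close> and \<open>u(p) q\<^sub>j\<close> to \<open>i (u \<partial>\<^sub>j + 1/2 \<partial>\<^sub>ju)\<close>, hence
  \<open>\<rho>\<^sub>a(X) = \<Sum>\<^sub>j g\<^sub>j \<partial>\<^sub>j + 1/2 div g + a/2 l\<^sub>1\<close>, and \<open>div g = (n+1) l\<^sub>1\<close> because \<open>X\<close> is traceless.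
  So \<open>\<rho>\<^sub>a(X) = -m(a) l\<^sub>1 + \<Sum>\<^sub>j g\<^sub>j \<partial>\<^sub>j\<close> is a first order operator, \<open>g\<close> being the vector field of
  the projective action of \<open>-X\<close>. Commutators of first order operators are of first order,
  and comparing coefficients reduces the bracket relation to the entries of \<open>XY\<close> and \<open>YX\<close>;
  the explicit formulas are the cases \<open>X = H\<^sub>k, E\<^sub>i\<^sub>j\<close>.\<close>

abbreviation lookup :: "('a \<Rightarrow>\<^sub>0 'b::zero) \<Rightarrow> 'a \<Rightarrow> 'b" where
  "lookup \<equiv> Poly_Mapping.lookup"

abbreviation keys :: "('a \<Rightarrow>\<^sub>0 'b::zero) \<Rightarrow> 'a set" where
  "keys \<equiv> Poly_Mapping.keys"

abbreviation single :: "'a \<Rightarrow> 'b::zero \<Rightarrow> 'a \<Rightarrow>\<^sub>0 'b" where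
  "single \<equiv> Poly_Mapping.single"

section \<open>Calculus of polynomials\<close>

lemma lookup_single_eq: "lookup (single k v) k' = (if k = k' then v else 0)"
  by (simp add: Poly_Mapping.lookup_single when_def)

lemma Const_add: "Const (a + b) = Const a + Const b"
  by (simp add: Const_def Poly_Mapping.single_add)

lemma Const_mult: "Const (a * b) = (Const a * Const b :: 'v mpoly)"
  by (simp add: Const_def Poly_Mapping.mult_single)

lemma Const_0 [simp]: "Const 0 = 0"
  by (simp add: Const_def)

lemma Const_1 [simp]: "Const 1 = 1"
  by (simp add: Const_def)

lemma Const_uminus: "Const (- a) = - Const a"
  by (simp add: Const_def Poly_Mapping.single_uminus)

lemma Const_diff: "Const (a - b) = Const a - Const b"
  by (simp add: Const_def Poly_Mapping.single_diff)

lemma Const_sum: "Const (\<Sum>x\<in>S. f x) = (\<Sum>x\<in>S. Const (f x))"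
  by (induction S rule: infinite_finite_induct) (auto simp: Const_add)

lemma Const_mult_single: "Const c * single m d = single m (c * d)"
  by (simp add: Const_def Poly_Mapping.mult_single)

lemma single_eq_Const_mult: "single m c = Const c * single m 1"
  by (simp add: Const_mult_single)

lemma Const_of_nat: "Const (of_nat k) = of_nat k"
  by (induction k) (simp_all add: Const_add)

lemma Const_i_squared: "Const \<i> * (Const \<i> * F) = - (F :: 'v mpoly)"
proof -
  have "Const \<i> * Const \<i> = (Const (-1) :: 'v mpoly)"
    by (simp flip: Const_mult)
  then show ?thesis
    by (simp add: mult.assoc[symmetric] Const_uminus)
qed

lemma poly_mapping_single_induct:
  fixes f :: "'a \<Rightarrow>\<^sub>0 'b::monoid_add"
  assumes "P 0" and "\<And>m c f. P f \<Longrightarrow> P (single m c + f)"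
  shows "P f"
proof (induction f rule: Poly_Mapping.update_induct)
  case const
  then show ?case using assms(1) by simp
next
  case (update f a b)
  have "Poly_Mapping.update a b f = single a b + f"
    using update.hyps
    by (intro poly_mapping_eqI)
       (auto simp: Poly_Mapping.lookup_update lookup_add lookup_single_eq in_keys_iff)
  then show ?case using assms(2)[OF update.IH] by simp
qed

lemma monomial_induct:
  fixes m :: "'v \<Rightarrow>\<^sub>0 nat"
  assumes "P 0" and "\<And>m v. P m \<Longrightarrow> P (m + single v 1)"
  shows "P m"
proof (induction m rule: poly_mapping_single_induct)
  case 1
  then show ?case using assms(1) by simp
next
  case (2 v k f)
  show ?case
  proof (induction k)
    case 0
    then show ?case using 2 by simp
  next
    case (Suc k)
    have "single v (Suc k) + f = (single v k + f) + single v 1"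
      by (simp add: Poly_Mapping.single_add[symmetric] add_ac)
    with Suc assms(2) show ?case by metis
  qed
qed

lemma pd_add: "pd v (F + G) = pd v F + pd v G"
  unfolding pd_def
  by (rule setsum_keys_plus_distrib) (auto simp: distrib_right Poly_Mapping.single_add)

lemma pd_single: "pd v (single m c) = single (m - single v 1) (c * of_nat (lookup m v))"
  by (simp add: pd_def)

lemma pd_0 [simp]: "pd v 0 = 0"
  by (simp add: pd_def)

lemma pd_uminus: "pd v (- F) = - pd v F"
  using pd_add[of v F "- F"] by (simp add: add_eq_0_iff2)

lemma pd_diff: "pd v (F - G) = pd v F - pd v G"
  using pd_add[of v F "- G"] pd_uminus[of v G] by simp

lemma pd_sum: "pd v (\<Sum>x\<in>S. f x) = (\<Sum>x\<in>S. pd v (f x))"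
  by (induction S rule: infinite_finite_induct) (auto simp: pd_add)

lemma pd_mult_single:
  "pd v (single m c * single m' c') = pd v (single m c) * single m' c' + single m c * pd v (single m' c')"
proof -
  let ?e = "single v (1::nat)"
  have left: "lookup m v > 0 \<Longrightarrow> m - ?e + m' = m + m' - ?e"
    and right: "lookup m' v > 0 \<Longrightarrow> m + (m' - ?e) = m + m' - ?e"
    by (rule poly_mapping_eqI; auto simp: lookup_add lookup_minus lookup_single_eq)+
  have "pd v (single m c * single m' c')
      = single (m + m' - ?e) (c * c' * of_nat (lookup m v) + c * c' * of_nat (lookup m' v))"
    by (simp add: Poly_Mapping.mult_single pd_single lookup_add algebra_simps)
  also have "\<dots> = single (m + m' - ?e) (c * c' * of_nat (lookup m v))
      + single (m + m' - ?e) (c * c' * of_nat (lookup m' v))"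
    by (simp add: Poly_Mapping.single_add)
  also have "single (m + m' - ?e) (c * c' * of_nat (lookup m v)) = pd v (single m c) * single m' c'"
    using left by (cases "lookup m v > 0") (auto simp: pd_single Poly_Mapping.mult_single algebra_simps)
  also have "single (m + m' - ?e) (c * c' * of_nat (lookup m' v)) = single m c * pd v (single m' c')"
    using right by (cases "lookup m' v > 0") (auto simp: pd_single Poly_Mapping.mult_single algebra_simps)
  finally show ?thesis .
qed

lemma pd_mult: "pd v (F * G) = pd v F * G + F * pd v G"
proof -
  have single_left: "pd v (single m c * G) = pd v (single m c) * G + single m c * pd v G" for m c
    by (induction G rule: poly_mapping_single_induct)
       (simp_all add: distrib_left distrib_right pd_add pd_mult_single)
  show ?thesis
    by (induction F rule: poly_mapping_single_induct)
       (simp_all add: distrib_left distrib_right pd_add single_left)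
qed

lemma pd_Const [simp]: "pd v (Const c) = 0"
  by (simp add: Const_def pd_single)

lemma pd_1 [simp]: "pd v 1 = 0"
  using pd_Const[of v 1] by simp

lemma pd_Var: "pd v (Var w) = Const (if v = w then 1 else 0)"
  by (simp add: Var_def Const_def pd_single lookup_single_eq)

lemma pd_Const_mult: "pd v (Const c * F) = Const c * pd v F"
  by (simp add: pd_mult)

lemma pd_commute: "pd v (pd w F) = pd w (pd v F)"
proof (induction F rule: poly_mapping_single_induct)
  case 1
  then show ?case by simp
next
  case (2 m c f)
  have "pd v (pd w (single m c)) = pd w (pd v (single m c))"
  proof (cases "v = w")
    case False
    have "m - single w 1 - single v 1 = m - single v 1 - single w 1"
      by (rule poly_mapping_eqI) (auto simp: lookup_minus lookup_single_eq)
    with False show ?thesis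
      by (simp add: pd_single lookup_minus lookup_single_eq algebra_simps)
  qed simp
  with 2 show ?case by (simp add: pd_add)
qed

definition monom_eval :: "('v \<Rightarrow> 'w mpoly) \<Rightarrow> ('v \<Rightarrow>\<^sub>0 nat) \<Rightarrow> 'w mpoly" where
  "monom_eval \<sigma> m = (\<Prod>v\<in>keys m. \<sigma> v ^ lookup m v)"

lemma monom_eval_superset:
  "finite S \<Longrightarrow> keys m \<subseteq> S \<Longrightarrow> monom_eval \<sigma> m = (\<Prod>v\<in>S. \<sigma> v ^ lookup m v)"
  unfolding monom_eval_def by (rule prod.mono_neutral_left) (auto simp: in_keys_iff)

lemma monom_eval_add: "monom_eval \<sigma> (m + m') = monom_eval \<sigma> m * monom_eval \<sigma> m'"
proof -
  let ?S = "keys m \<union> keys m'"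
  have "monom_eval \<sigma> (m + m') = (\<Prod>v\<in>?S. \<sigma> v ^ lookup (m + m') v)"
    by (rule monom_eval_superset) (use Poly_Mapping.keys_add[of m m'] in auto)
  also have "\<dots> = (\<Prod>v\<in>?S. \<sigma> v ^ lookup m v) * (\<Prod>v\<in>?S. \<sigma> v ^ lookup m' v)"
    by (simp add: lookup_add power_add prod.distrib)
  also have "\<dots> = monom_eval \<sigma> m * monom_eval \<sigma> m'"
    using monom_eval_superset[of ?S m \<sigma>] monom_eval_superset[of ?S m' \<sigma>] by simp
  finally show ?thesis .
qed

lemma monom_eval_0 [simp]: "monom_eval \<sigma> 0 = 1"
  by (simp add: monom_eval_def)

lemma monom_eval_single: "monom_eval \<sigma> (single v k) = \<sigma> v ^ k"
  by (simp add: monom_eval_def)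

lemma monom_eval_Var: "monom_eval Var m = single m 1"
  by (induction m rule: monomial_induct)
     (simp_all add: monom_eval_add monom_eval_single Var_def Poly_Mapping.mult_single)

lemma subst_single: "subst \<sigma> (single m c) = Const c * monom_eval \<sigma> m"
  by (simp add: subst_def monom_eval_def)

lemma subst_add: "subst \<sigma> (F + G) = subst \<sigma> F + subst \<sigma> G"
  unfolding subst_def
  by (rule setsum_keys_plus_distrib) (auto simp: distrib_right Const_add)

lemma subst_0 [simp]: "subst \<sigma> 0 = 0"
  by (simp add: subst_def)

lemma subst_uminus: "subst \<sigma> (- F) = - subst \<sigma> F"
  using subst_add[of \<sigma> F "- F"] by (simp add: add_eq_0_iff2)

lemma subst_diff: "subst \<sigma> (F - G) = subst \<sigma> F - subst \<sigma> G"
  using subst_add[of \<sigma> F "- G"] subst_uminus[of \<sigma> G] by simp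

lemma subst_sum: "subst \<sigma> (\<Sum>x\<in>S. f x) = (\<Sum>x\<in>S. subst \<sigma> (f x))"
  by (induction S rule: infinite_finite_induct) (auto simp: subst_add)

lemma subst_mult: "subst \<sigma> (F * G) = subst \<sigma> F * subst \<sigma> G"
proof -
  have single_left: "subst \<sigma> (single m c * G) = subst \<sigma> (single m c) * subst \<sigma> G" for m c
    by (induction G rule: poly_mapping_single_induct)
       (simp_all add: distrib_left subst_add Poly_Mapping.mult_single subst_single
         monom_eval_add Const_mult algebra_simps)
  show ?thesis
    by (induction F rule: poly_mapping_single_induct)
       (simp_all add: distrib_right subst_add single_left)
qed

lemma subst_Const [simp]: "subst \<sigma> (Const c) = Const c"
  by (simp add: Const_def subst_single)

lemma subst_Var [simp]: "subst \<sigma> (Var v) = \<sigma> v"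
  by (simp add: Var_def subst_single monom_eval_single)

lemma subst_1 [simp]: "subst \<sigma> 1 = 1"
  using subst_Const[of \<sigma> 1] by simp

lemma subst_power: "subst \<sigma> (F ^ k) = subst \<sigma> F ^ k"
  by (induction k) (simp_all add: subst_mult)

lemma subst_prod: "subst \<sigma> (\<Prod>x\<in>S. f x) = (\<Prod>x\<in>S. subst \<sigma> (f x))"
  by (induction S rule: infinite_finite_induct) (simp_all add: subst_mult)

lemma subst_monom_eval: "subst \<tau> (monom_eval \<sigma> m) = monom_eval (\<lambda>v. subst \<tau> (\<sigma> v)) m"
  by (simp add: monom_eval_def subst_prod subst_power)

lemma subst_subst: "subst \<tau> (subst \<sigma> F) = subst (\<lambda>v. subst \<tau> (\<sigma> v)) F"
  by (induction F rule: poly_mapping_single_induct)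
     (simp_all add: subst_add subst_single subst_mult subst_monom_eval)

lemma subst_Var_id: "subst Var F = F"
  by (induction F rule: poly_mapping_single_induct)
     (simp_all add: subst_add subst_single monom_eval_Var Const_mult_single)

lemma monomial_diff_add_commute:
  assumes "lookup m j > 0"
  shows "m - single j 1 + single v 1 = m + single v 1 - single j (1::nat)"
proof (rule poly_mapping_eqI)
  fix k
  show "lookup (m - single j 1 + single v 1) k = lookup (m + single v 1 - single j 1) k"
    using assms by (cases "k = j") (simp_all add: lookup_add lookup_minus lookup_single_eq)
qed

lemma pd_monom_eval:
  assumes "\<And>v. pd w (\<sigma> v) = Const (if v = j then c else 0)"
  shows "pd w (monom_eval \<sigma> m) = Const (c * of_nat (lookup m j)) * monom_eval \<sigma> (m - single j 1)"
proof (induction m rule: monomial_induct)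
  case 1
  then show ?case by simp
next
  case (2 m v)
  let ?e = "single j (1::nat)"
  have shift: "Const (c * of_nat (lookup m j)) * monom_eval \<sigma> (m - ?e) * \<sigma> v
      = Const (c * of_nat (lookup m j)) * monom_eval \<sigma> (m + single v 1 - ?e)"
  proof (cases "lookup m j > 0")
    case True
    have "monom_eval \<sigma> (m - ?e + single v 1) = monom_eval \<sigma> (m - ?e) * \<sigma> v"
      by (simp add: monom_eval_add monom_eval_single)
    then show ?thesis
      using monomial_diff_add_commute[OF True, of v] by (simp add: mult.assoc)
  qed simp
  have "pd w (monom_eval \<sigma> (m + single v 1))
      = Const (c * of_nat (lookup m j)) * monom_eval \<sigma> (m - ?e) * \<sigma> v
        + monom_eval \<sigma> m * Const (if v = j then c else 0)"
    using 2 assms by (simp add: monom_eval_add monom_eval_single pd_mult)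
  also have "\<dots> = Const (c * of_nat (lookup (m + single v 1) j)) * monom_eval \<sigma> (m + single v 1 - ?e)"
  proof (cases "v = j")
    case True
    have "Const (c * of_nat (lookup m j)) * monom_eval \<sigma> m + monom_eval \<sigma> m * Const c
        = Const (c * of_nat (lookup m j + 1)) * monom_eval \<sigma> m"
      by (simp add: Const_add ring_distribs mult.commute add.commute)
    then show ?thesis
      using shift True by (simp add: lookup_add lookup_single_eq)
  next
    case False
    then show ?thesis
      using shift by (simp add: lookup_add lookup_single_eq)
  qed
  finally show ?case .
qed

lemma pd_subst:
  assumes "\<And>v. pd w (\<sigma> v) = Const (if v = j then 1 else 0)"
  shows "pd w (subst \<sigma> F) = subst \<sigma> (pd j F)"
proof (induction F rule: poly_mapping_single_induct)
  case 1
  then show ?case by simp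
next
  case (2 m c f)
  have "pd w (subst \<sigma> (single m c)) = subst \<sigma> (pd j (single m c))"
    using pd_monom_eval[of w \<sigma> j 1 m, OF assms]
    by (simp add: subst_single pd_Const_mult pd_single Const_mult mult.assoc)
  with 2 show ?case by (simp add: subst_add pd_add)
qed

section \<open>Weyl quantization of symbols of degree at most one in q\<close>

lemma lookup_ppart: "lookup (ppart m) k = lookup m (Inl k)"
proof -
  have "finite {k. lookup m (Inl k) \<noteq> 0}"
    using finite_vimageI[OF finite_keys inj_Inl, of m] by (simp add: vimage_def in_keys_iff)
  then show ?thesis by (simp add: ppart_def lookup_Abs_poly_mapping)
qed

lemma lookup_qpart: "lookup (qpart m) k = lookup m (Inr k)"
proof -
  have "finite {k. lookup m (Inr k) \<noteq> 0}"
    using finite_vimageI[OF finite_keys inj_Inr, of m] by (simp add: vimage_def in_keys_iff)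
  then show ?thesis by (simp add: qpart_def lookup_Abs_poly_mapping)
qed

lemma ppart_add: "ppart (m + m') = ppart m + ppart m'"
  and qpart_add: "qpart (m + m') = qpart m + qpart m'"
  by (rule poly_mapping_eqI; simp add: lookup_ppart lookup_qpart lookup_add)+

lemma ppart_single [simp]:
  "ppart (single (Inl k) t) = single k t" "ppart (single (Inr k) t) = 0"
  and qpart_single [simp]:
  "qpart (single (Inl k) t) = 0" "qpart (single (Inr k) t) = single k t"
  and ppart_0 [simp]: "ppart 0 = 0" and qpart_0 [simp]: "qpart 0 = 0"
  by (rule poly_mapping_eqI; simp add: lookup_ppart lookup_qpart lookup_single_eq)+

lemma monom_eval_pv:
  "\<exists>m'. monom_eval pv m = single m' 1 \<and> ppart m' = m \<and> qpart m' = 0"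
proof (induction m rule: monomial_induct)
  case 1
  show ?case by (intro exI[of _ 0]) simp
next
  case (2 m v)
  then obtain m' where "monom_eval pv m = single m' 1" "ppart m' = m" "qpart m' = 0"
    by blast
  then show ?case
    by (intro exI[of _ "m' + single (Inl v) 1"])
       (simp add: monom_eval_add monom_eval_single Var_def Poly_Mapping.mult_single ppart_add qpart_add)
qed

lemma W_add: "W (F + G) f = W F f + W G f"
  unfolding W_def
  by (rule setsum_keys_plus_distrib) (auto simp: distrib_right Const_add)

lemma W_0 [simp]: "W 0 f = 0"
  by (simp add: W_def)

lemma W_single: "W (single m c) f = Const c * Wmon (ppart m) (qpart m) f"
  by (simp add: W_def)

lemma W_uminus: "W (- F) f = - W F f"
  using W_add[of F "- F" f] by (simp add: add_eq_0_iff2)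

lemma W_sum: "W (\<Sum>x\<in>S. g x) f = (\<Sum>x\<in>S. W (g x) f)"
  by (induction S rule: infinite_finite_induct) (auto simp: W_add)

lemma W_Const_mult: "W (Const c * F) f = Const c * W F f"
  by (induction F rule: poly_mapping_single_induct)
     (simp_all add: distrib_left W_add Const_mult_single W_single Const_mult mult.assoc)

definition half_shift :: "nat \<Rightarrow> (nat + nat) mpoly" where
  "half_shift k = Var (Inl k) + Const (1/2) * Var (Inr k)"

definition shift :: "nat \<Rightarrow> (nat + nat) mpoly" where
  "shift k = Var (Inl k) + Var (Inr k)"

definition at_s_zero :: "nat + nat \<Rightarrow> nat mpoly" where
  "at_s_zero v = (case v of Inl k \<Rightarrow> Var k | Inr k \<Rightarrow> 0)"

lemma Wmon_eq_subst:
  "Wmon \<beta> \<alpha> f = subst at_s_zero (iDs \<alpha> (monom_eval half_shift \<beta> * subst shift f))"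
  unfolding Wmon_def monom_eval_def half_shift_def shift_def at_s_zero_def Let_def by simp

lemma subst_at_s_zero_half_shift: "subst at_s_zero (monom_eval half_shift m) = single m 1"
  by (simp add: subst_monom_eval half_shift_def at_s_zero_def subst_add subst_mult monom_eval_Var)

lemma subst_at_s_zero_shift: "subst at_s_zero (subst shift f) = f"
  by (simp add: subst_subst shift_def at_s_zero_def subst_add subst_Var_id)

lemma Wmon_0: "Wmon \<beta> 0 f = single \<beta> 1 * f"
  by (simp add: Wmon_eq_subst iDs_def subst_mult subst_at_s_zero_half_shift subst_at_s_zero_shift)

lemma Wmon_single:
  "Wmon \<beta> (single j 1) f
    = Const \<i> * (Const (of_nat (lookup \<beta> j) / 2) * single (\<beta> - single j 1) 1 * f + single \<beta> 1 * pd j f)"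
proof -
  have iDs_single: "iDs (single j 1) G = Const \<i> * pd (Inr j) G" for G
    by (simp add: iDs_def)
  have pd_half_shift: "pd (Inr j) (monom_eval half_shift \<beta>)
      = Const (1/2 * of_nat (lookup \<beta> j)) * monom_eval half_shift (\<beta> - single j 1)"
    by (rule pd_monom_eval) (simp add: half_shift_def pd_add pd_Const_mult pd_Var flip: Const_mult)
  have pd_shift: "pd (Inr j) (subst shift f) = subst shift (pd j f)"
    by (rule pd_subst) (simp add: shift_def pd_add pd_Var)
  show ?thesis
    unfolding Wmon_eq_subst iDs_single
    by (simp add: pd_mult pd_half_shift pd_shift subst_mult subst_add
        subst_at_s_zero_half_shift subst_at_s_zero_shift)
qed

lemma W_subst_pv: "W (subst pv u) f = u * f"
proof (induction u rule: poly_mapping_single_induct)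
  case 1
  then show ?case by simp
next
  case (2 m c u)
  obtain m' where m': "monom_eval pv m = single m' 1" "ppart m' = m" "qpart m' = 0"
    using monom_eval_pv by blast
  have "W (subst pv (single m c)) f = single m c * f"
    using m' by (simp add: subst_single Const_mult_single W_single Wmon_0 mult.assoc
        flip: single_eq_Const_mult)
  with 2 show ?case by (simp add: subst_add W_add distrib_right)
qed

text \<open>The zeroth order term comes from the symmetric (Weyl) ordering of \<open>u(p) q\<^sub>j\<close>.\<close>

lemma W_subst_pv_mult_qv:
  "W (subst pv u * qv j) f = Const \<i> * (u * pd j f + Const (1/2) * pd j u * f)"
proof (induction u rule: poly_mapping_single_induct)
  case 1
  then show ?case by simp
next
  case (2 m c u)
  obtain m' where m': "monom_eval pv m = single m' 1" "ppart m' = m" "qpart m' = 0"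
    using monom_eval_pv by blast
  have "subst pv (single m c) * qv j = single (m' + single (Inr j) 1) c"
    using m' by (simp add: subst_single Const_mult_single Var_def Poly_Mapping.mult_single)
  then have "W (subst pv (single m c) * qv j) f = Const c * Wmon m (single j 1) f"
    using m' by (simp add: W_single ppart_add qpart_add)
  also have "\<dots> = Const c * (Const \<i> * (Const (of_nat (lookup m j) / 2)
      * single (m - single j 1) 1 * f + single m 1 * pd j f))"
    unfolding Wmon_single ..
  also have "\<dots> = Const \<i> * (single m c * pd j f + Const (1/2) * pd j (single m c) * f)"
  proof -
    have "Const (of_nat (lookup m j) / 2) = Const (of_nat (lookup m j)) * (Const (1/2) :: nat mpoly)"
      by (simp flip: Const_mult)
    moreover have "pd j (single m c) = Const c * Const (of_nat (lookup m j)) * single (m - single j 1) 1"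
      by (simp add: pd_single Const_mult_single flip: Const_mult)
    ultimately show ?thesis
      unfolding single_eq_Const_mult[of m c] by (simp add: algebra_simps)
  qed
  finally show ?case
    using 2 by (simp add: subst_add distrib_right W_add pd_add distrib_left)
qed

section \<open>The Lie algebra and the map phi1\<close>

declare sum.cl_ivl_Suc [simp del]

lemma sum_split_first:
  fixes g :: "nat \<Rightarrow> 'a::comm_monoid_add"
  shows "(\<Sum>k=1..n+1. g k) = g 1 + (\<Sum>k=2..n+1. g k)"
  by (simp add: sum.atLeast_Suc_atMost numeral_2_eq_2)

lemma sum_shift_from_2:
  fixes g :: "nat \<Rightarrow> 'a::comm_monoid_add"
  shows "(\<Sum>k=2..n+1. g k) = (\<Sum>j=1..n. g (j+1))"
  using sum.shift_bounds_cl_Suc_ivl[of g 1 n] by (simp add: numeral_2_eq_2)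

lemma sl_madd: "X \<in> sl n \<Longrightarrow> Y \<in> sl n \<Longrightarrow> madd X Y \<in> sl n"
  by (simp add: sl_def madd_def sum.distrib)

lemma sl_msmult: "X \<in> sl n \<Longrightarrow> msmult c X \<in> sl n"
  by (simp add: sl_def msmult_def flip: sum_distrib_left)

lemma sl_zero: "(\<lambda>i j. 0) \<in> sl n"
  by (simp add: sl_def)

lemma E_in_sl: "i \<in> {1..n+1} \<Longrightarrow> j \<in> {1..n+1} \<Longrightarrow> i \<noteq> j \<Longrightarrow> E i j \<in> sl n"
  unfolding sl_def E_def by (auto intro!: sum.neutral)

lemma E_diff_in_sl: "i \<in> {1..n+1} \<Longrightarrow> j \<in> {1..n+1} \<Longrightarrow> msub (E i i) (E j j) \<in> sl n"
  by (auto simp: sl_def E_def msub_def sum_subtractf)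

lemma bracket_in_sl: "X \<in> sl n \<Longrightarrow> Y \<in> sl n \<Longrightarrow> bracket n X Y \<in> sl n"
proof -
  assume X: "X \<in> sl n" and Y: "Y \<in> sl n"
  have "(\<Sum>i=1..n+1. \<Sum>k=1..n+1. Y i k * X k i) = (\<Sum>k=1..n+1. \<Sum>i=1..n+1. Y i k * X k i)"
    by (rule sum.swap)
  then have "(\<Sum>i=1..n+1. bracket n X Y i i) = 0"
    by (simp add: bracket_def msub_def mmult_def sum_subtractf mult.commute)
  with X Y show ?thesis
    by (auto simp: sl_def bracket_def msub_def mmult_def)
qed

lemma sl_diag_sum_from_2: "X \<in> sl n \<Longrightarrow> (\<Sum>k=2..n+1. X k k) = - X 1 1"
proof -
  assume "X \<in> sl n"
  then have "(\<Sum>k=1..n+1. X k k) = 0"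
    by (simp add: sl_def)
  then have "X 1 1 + (\<Sum>k=2..n+1. X k k) = 0"
    unfolding sum_split_first .
  then show ?thesis
    by (simp add: eq_neg_iff_add_eq_0 add.commute)
qed

definition msum :: "'i set \<Rightarrow> ('i \<Rightarrow> cmat) \<Rightarrow> cmat" where
  "msum S M = (\<lambda>i j. \<Sum>t\<in>S. M t i j)"

lemma msum_in_sl: "finite S \<Longrightarrow> (\<And>t. t \<in> S \<Longrightarrow> M t \<in> sl n) \<Longrightarrow> msum S M \<in> sl n"
proof (induction S rule: finite_induct)
  case empty
  then show ?case by (simp add: msum_def sl_zero)
next
  case (insert t S)
  have "msum (insert t S) M = madd (M t) (msum S M)"
    using insert by (simp add: msum_def madd_def fun_eq_iff)
  then show ?case using insert sl_madd by simp
qed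

lemma linear_on_sl_msum:
  assumes add: "\<forall>X\<in>sl n. \<forall>Y\<in>sl n. \<phi> (madd X Y) = \<phi> X + \<phi> Y"
    and hom: "\<forall>X\<in>sl n. \<forall>c. \<phi> (msmult c X) = Const c * \<phi> X"
    and "finite S" and "\<And>t. t \<in> S \<Longrightarrow> M t \<in> sl n"
  shows "\<phi> (msum S M) = (\<Sum>t\<in>S. \<phi> (M t))"
  using assms(3,4)
proof (induction S rule: finite_induct)
  case empty
  have "msmult 0 (\<lambda>i j. 0) = (\<lambda>i j. 0)"
    by (simp add: msmult_def)
  with hom sl_zero have "\<phi> (\<lambda>i j. 0) = 0"
    by (metis Const_0 mult_zero_left)
  then show ?case by (simp add: msum_def)
next
  case (insert t S)
  have "msum (insert t S) M = madd (M t) (msum S M)"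
    using insert by (simp add: msum_def madd_def fun_eq_iff)
  then show ?case using insert add msum_in_sl[of S M n] by simp
qed

lemma sl_decomposition:
  assumes X: "X \<in> sl n"
  defines "R \<equiv> {1..n+1}"
  shows "X = madd (msum (SIGMA i:R. R - {i}) (\<lambda>(i, j). msmult (X i j) (E i j)))
                  (msum {2..n+1} (\<lambda>k. msmult (X k k) (msub (E k k) (E 1 1))))"
proof (intro ext)
  fix a b
  have outside: "X a b = 0" if "a \<notin> R \<or> b \<notin> R"
    using X that by (auto simp: sl_def R_def)
  have off_diag: "msum (SIGMA i:R. R - {i}) (\<lambda>(i, j). msmult (X i j) (E i j)) a b
      = (if (a, b) \<in> (SIGMA i:R. R - {i}) then X a b else 0)"
  proof -
    have "msum (SIGMA i:R. R - {i}) (\<lambda>(i, j). msmult (X i j) (E i j)) a b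
        = (\<Sum>t\<in>(SIGMA i:R. R - {i}). if t = (a, b) then X a b else 0)"
      unfolding msum_def msmult_def E_def by (intro sum.cong) (auto split: if_splits)
    then show ?thesis by (simp add: R_def)
  qed
  have diag: "msum {2..n+1} (\<lambda>k. msmult (X k k) (msub (E k k) (E 1 1))) a b
      = (if a = b \<and> a \<in> {2..n+1} then X a a else 0) - (if a = 1 \<and> b = 1 then - X 1 1 else 0)"
  proof -
    have "msum {2..n+1} (\<lambda>k. msmult (X k k) (msub (E k k) (E 1 1))) a b
        = (\<Sum>k=2..n+1. (if k = a then (if a = b then X k k else 0) else 0)
            - (if a = 1 \<and> b = 1 then X k k else 0))"
      unfolding msum_def msmult_def msub_def E_def by (intro sum.cong) auto
    also have "\<dots> = (if a = b \<and> a \<in> {2..n+1} then X a a else 0)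
        - (if a = 1 \<and> b = 1 then (\<Sum>k=2..n+1. X k k) else 0)"
      by (cases "a = 1 \<and> b = 1") (auto simp: sum_subtractf sum.delta sum_negf)
    finally show ?thesis using sl_diag_sum_from_2[OF X] by simp
  qed
  show "X a b = madd (msum (SIGMA i:R. R - {i}) (\<lambda>(i, j). msmult (X i j) (E i j)))
                  (msum {2..n+1} (\<lambda>k. msmult (X k k) (msub (E k k) (E 1 1)))) a b"
    unfolding madd_def off_diag diag
  proof (cases "a = b")
    case True
    then show "X a b = (if (a, b) \<in> (SIGMA i:R. R - {i}) then X a b else 0)
        + ((if a = b \<and> a \<in> {2..n+1} then X a a else 0) - (if a = 1 \<and> b = 1 then - X 1 1 else 0))"
      using outside by (cases "a = 1") (auto simp: R_def)
  next
    case False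
    then show "X a b = (if (a, b) \<in> (SIGMA i:R. R - {i}) then X a b else 0)
        + ((if a = b \<and> a \<in> {2..n+1} then X a a else 0) - (if a = 1 \<and> b = 1 then - X 1 1 else 0))"
      using outside by auto
  qed
qed

definition phi1_spec :: "nat \<Rightarrow> (cmat \<Rightarrow> (nat + nat) mpoly) \<Rightarrow> bool" where
  "phi1_spec n \<phi> \<longleftrightarrow>
      (\<forall>X\<in>sl n. \<forall>Y\<in>sl n. \<phi> (madd X Y) = \<phi> X + \<phi> Y)
    \<and> (\<forall>X\<in>sl n. \<forall>c. \<phi> (msmult c X) = Const c * \<phi> X)
    \<and> \<phi> (msub (E 1 1) (E 2 2)) = 1
    \<and> (\<forall>k. 2 \<le> k \<and> k \<le> n \<longrightarrow> \<phi> (msub (E k k) (E (k+1) (k+1))) = 0)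
    \<and> (\<forall>k. 1 \<le> k \<and> k \<le> n \<longrightarrow> \<phi> (E 1 (k+1)) = pv k)
    \<and> (\<forall>i j. 2 \<le> i \<and> i \<le> n+1 \<and> 1 \<le> j \<and> j \<le> n+1 \<and> j \<noteq> i \<longrightarrow> \<phi> (E i j) = 0)
    \<and> (\<forall>X. X \<notin> sl n \<longrightarrow> \<phi> X = 0)"

lemma phi1_eq_The: "phi1 n = (THE \<phi>. phi1_spec n \<phi>)"
  unfolding phi1_def phi1_spec_def ..

lemma phi1_spec_E_diag_diff:
  assumes spec: "phi1_spec n \<phi>" and k: "2 \<le> k" "k \<le> n + 1"
  shows "\<phi> (msub (E k k) (E 1 1)) = -1"
  using k
proof (induction k rule: dec_induct)
  case base
  have "msub (E 2 2) (E 1 1) = msmult (-1) (msub (E 1 1) (E 2 2))"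
    by (auto simp: fun_eq_iff msub_def msmult_def E_def)
  moreover have "msub (E 1 1) (E 2 2) \<in> sl n"
    using k by (intro E_diff_in_sl) auto
  ultimately show ?case
    using spec by (simp add: phi1_spec_def Const_uminus)
next
  case (step m)
  have "msub (E (Suc m) (Suc m)) (E 1 1)
      = madd (msmult (-1) (msub (E m m) (E (m+1) (m+1)))) (msub (E m m) (E 1 1))"
    by (auto simp: fun_eq_iff msub_def msmult_def madd_def E_def)
  moreover have "msub (E m m) (E (m+1) (m+1)) \<in> sl n" and "msub (E m m) (E 1 1) \<in> sl n"
    using step.hyps k by (intro E_diff_in_sl; simp)+
  ultimately show ?case
    using spec step k sl_msmult by (simp add: phi1_spec_def)
qed

lemma phi1_spec_E:
  assumes spec: "phi1_spec n \<phi>" and "i \<in> {1..n+1}" "j \<in> {1..n+1}" "i \<noteq> j"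
  shows "\<phi> (E i j) = (if i = 1 then pv (j - 1) else 0)"
proof (cases "i = 1")
  case True
  then have j: "1 \<le> j - 1 \<and> j - 1 \<le> n"
    using assms by auto
  with spec have "\<phi> (E 1 (j - 1 + 1)) = pv (j - 1)"
    unfolding phi1_spec_def by blast
  moreover have "j - 1 + 1 = j"
    using j by arith
  ultimately show ?thesis
    using True by simp
next
  case False
  then show ?thesis
    using spec assms by (auto simp: phi1_spec_def)
qed

definition hcoord :: "nat \<Rightarrow> nat mpoly" where
  "hcoord b = (if b = 1 then 1 else Var (b - 1))"

definition row_form :: "nat \<Rightarrow> cmat \<Rightarrow> nat \<Rightarrow> nat mpoly" where
  "row_form n M r = (\<Sum>b=1..n+1. Const (M r b) * hcoord b)"

lemma row_form_split:
  "row_form n M r = Const (M r 1) + (\<Sum>j=1..n. Const (M r (j+1)) * Var j)"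
  unfolding row_form_def sum_split_first sum_shift_from_2 by (simp add: hcoord_def)

lemma phi1_spec_determined:
  assumes n: "1 \<le> n" and spec: "phi1_spec n \<phi>" and X: "X \<in> sl n"
  shows "\<phi> X = subst pv (row_form n X 1)"
proof -
  define R where "R = {1..n+1::nat}"
  define S where "S = (SIGMA i:R. R - {i})"
  define A where "A = msum S (\<lambda>(i, j). msmult (X i j) (E i j))"
  define D where "D = msum {2..n+1} (\<lambda>k. msmult (X k k) (msub (E k k) (E 1 1)))"
  have add: "\<forall>X\<in>sl n. \<forall>Y\<in>sl n. \<phi> (madd X Y) = \<phi> X + \<phi> Y"
    and hom: "\<forall>X\<in>sl n. \<forall>c. \<phi> (msmult c X) = Const c * \<phi> X"
    using spec by (simp_all add: phi1_spec_def)
  have off_diag_sl: "(\<lambda>(i, j). msmult (X i j) (E i j)) t \<in> sl n" if "t \<in> S" for t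
    using that by (auto simp: S_def R_def intro!: sl_msmult E_in_sl)
  have diag_sl: "msmult (X k k) (msub (E k k) (E 1 1)) \<in> sl n" if "k \<in> {2..n+1}" for k
    using that by (auto intro!: sl_msmult E_diff_in_sl)
  have "\<phi> X = \<phi> A + \<phi> D"
  proof -
    have "X = madd A D"
      unfolding A_def D_def S_def R_def by (rule sl_decomposition[OF X])
    moreover have "A \<in> sl n"
      unfolding A_def by (intro msum_in_sl off_diag_sl) (simp add: S_def R_def)
    moreover have "D \<in> sl n"
      unfolding D_def using diag_sl by (intro msum_in_sl) auto
    ultimately show ?thesis using add by simp
  qed
  have phi_off_diag_term:
    "\<phi> (msmult (X i j) (E i j)) = (if i = 1 then Const (X 1 j) * pv (j - 1) else 0)"
    if "(i, j) \<in> S" for i j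
    using that hom phi1_spec_E[OF spec, of i j] E_in_sl[of i n j] by (auto simp: S_def R_def)
  have "\<phi> A = (\<Sum>t\<in>S. \<phi> ((\<lambda>(i, j). msmult (X i j) (E i j)) t))"
    unfolding A_def by (intro linear_on_sl_msum[OF add hom] off_diag_sl) (simp add: S_def R_def)
  also have "\<dots> = (\<Sum>(i, j)\<in>S. if i = 1 then Const (X 1 j) * pv (j - 1) else 0)"
    by (rule sum.cong) (auto simp: phi_off_diag_term)
  also have "\<dots> = (\<Sum>i\<in>R. \<Sum>j\<in>R - {i}. if i = 1 then Const (X 1 j) * pv (j - 1) else 0)"
    by (simp add: S_def R_def sum.Sigma)
  also have "\<dots> = (\<Sum>i\<in>R. if i = 1 then (\<Sum>j\<in>R - {1}. Const (X 1 j) * pv (j - 1)) else 0)"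
    by (intro sum.cong) auto
  also have "\<dots> = (\<Sum>j\<in>R - {1}. Const (X 1 j) * pv (j - 1))"
    by (simp add: R_def)
  also have "R - {1} = {2..n+1}"
    by (auto simp: R_def)
  also have "(\<Sum>j=2..n+1. Const (X 1 j) * pv (j - 1)) = (\<Sum>j=1..n. Const (X 1 (j+1)) * pv j)"
    unfolding sum_shift_from_2 by simp
  finally have phi_A: "\<phi> A = (\<Sum>j=1..n. Const (X 1 (j+1)) * pv j)" .
  have "\<phi> D = (\<Sum>k=2..n+1. - Const (X k k))"
    unfolding D_def using hom phi1_spec_E_diag_diff[OF spec] E_diff_in_sl diag_sl
    by (subst linear_on_sl_msum[OF add hom]) (auto intro!: sum.cong)
  also have "\<dots> = Const (X 1 1)"
    using sl_diag_sum_from_2[OF X] by (simp add: sum_negf flip: Const_sum Const_uminus)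
  finally have phi_D: "\<phi> D = Const (X 1 1)" .
  show ?thesis
    using \<open>\<phi> X = \<phi> A + \<phi> D\<close> phi_A phi_D
    by (simp add: row_form_split subst_add subst_sum subst_mult add.commute)
qed

lemma row_form_madd: "row_form n (madd X Y) r = row_form n X r + row_form n Y r"
  by (simp add: row_form_def madd_def Const_add distrib_right sum.distrib)

lemma row_form_msmult: "row_form n (msmult c X) r = Const c * row_form n X r"
  by (simp add: row_form_def msmult_def Const_mult sum_distrib_left mult.assoc)

lemma row_form_msub: "row_form n (msub X Y) r = row_form n X r - row_form n Y r"
  by (simp add: row_form_def msub_def Const_diff left_diff_distrib sum_subtractf)

lemma row_form_unit_row:
  assumes "t \<in> {1..n+1}" and "\<And>b. M r b = (if b = t then c else 0)"
  shows "row_form n M r = Const c * hcoord t"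
proof -
  have "row_form n M r = (\<Sum>b=1..n+1. if b = t then Const c * hcoord b else 0)"
    unfolding row_form_def assms(2) by (intro sum.cong) simp_all
  then show ?thesis using assms(1) by simp
qed

lemma row_form_zero_row: "(\<And>b. M r b = 0) \<Longrightarrow> row_form n M r = 0"
  by (simp add: row_form_def)

lemma phi1_spec_row_form:
  assumes n: "1 \<le> n"
  shows "phi1_spec n (\<lambda>X. if X \<in> sl n then subst pv (row_form n X 1) else 0)"
  unfolding phi1_spec_def
proof (intro conjI allI ballI impI)
  fix X Y assume "X \<in> sl n" "Y \<in> sl n"
  then show "(if madd X Y \<in> sl n then subst pv (row_form n (madd X Y) 1) else 0)
      = (if X \<in> sl n then subst pv (row_form n X 1) else 0)
        + (if Y \<in> sl n then subst pv (row_form n Y 1) else 0)"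
    by (simp add: sl_madd row_form_madd subst_add)
next
  fix X c assume "X \<in> sl n"
  then show "(if msmult c X \<in> sl n then subst pv (row_form n (msmult c X) 1) else 0)
      = Const c * (if X \<in> sl n then subst pv (row_form n X 1) else 0)"
    by (simp add: sl_msmult row_form_msmult subst_mult)
next
  have "row_form n (msub (E 1 1) (E 2 2)) 1 = Const 1 * hcoord 1"
    by (rule row_form_unit_row) (auto simp: msub_def E_def)
  moreover have "msub (E 1 1) (E 2 2) \<in> sl n"
    using n by (intro E_diff_in_sl) auto
  ultimately show "(if msub (E 1 1) (E 2 2) \<in> sl n
      then subst pv (row_form n (msub (E 1 1) (E 2 2)) 1) else 0) = 1"
    by (simp add: hcoord_def)
next
  fix k assume "2 \<le> k \<and> k \<le> n"
  then have "row_form n (msub (E k k) (E (k+1) (k+1))) 1 = 0"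
    by (intro row_form_zero_row) (simp add: msub_def E_def)
  then show "(if msub (E k k) (E (k+1) (k+1)) \<in> sl n
      then subst pv (row_form n (msub (E k k) (E (k+1) (k+1))) 1) else 0) = 0"
    by simp
next
  fix k assume k: "1 \<le> k \<and> k \<le> n"
  then have "row_form n (E 1 (k+1)) 1 = Const 1 * hcoord (k+1)"
    by (intro row_form_unit_row) (auto simp: E_def)
  moreover have "E 1 (k+1) \<in> sl n"
    using k by (intro E_in_sl) auto
  ultimately show "(if E 1 (k+1) \<in> sl n then subst pv (row_form n (E 1 (k+1)) 1) else 0) = pv k"
    using k by (simp add: hcoord_def)
next
  fix i j assume "2 \<le> i \<and> i \<le> n+1 \<and> 1 \<le> j \<and> j \<le> n+1 \<and> j \<noteq> i"
  then have "row_form n (E i j) 1 = 0"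
    by (intro row_form_zero_row) (simp add: E_def)
  then show "(if E i j \<in> sl n then subst pv (row_form n (E i j) 1) else 0) = 0"
    by simp
qed (simp add: n)

lemma phi1_eq:
  assumes "1 \<le> n" and "X \<in> sl n"
  shows "phi1 n X = subst pv (row_form n X 1)"
proof -
  have "\<exists>!\<phi>. phi1_spec n \<phi>"
    using phi1_spec_row_form[OF assms(1)] phi1_spec_determined[OF assms(1)]
    by (intro ex1I[of _ "\<lambda>X. if X \<in> sl n then subst pv (row_form n X 1) else 0"])
       (auto simp: fun_eq_iff phi1_spec_def)
  then have "phi1_spec n (phi1 n)"
    unfolding phi1_eq_The by (rule theI')
  then show ?thesis
    using phi1_spec_determined assms by blast
qed

section \<open>rho as a first order differential operator\<close>

definition vec_field :: "nat \<Rightarrow> (nat \<Rightarrow> nat mpoly) \<Rightarrow> nat mpoly \<Rightarrow> nat mpoly" where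
  "vec_field n g h = (\<Sum>j=1..n. g j * pd j h)"

definition diff_op :: "nat \<Rightarrow> nat mpoly \<Rightarrow> (nat \<Rightarrow> nat mpoly) \<Rightarrow> nat mpoly \<Rightarrow> nat mpoly" where
  "diff_op n c g f = c * f + vec_field n g f"

text \<open>The vector field of the infinitesimal action of \<open>-X\<close> by linear fractional
  transformations on the affine chart \<open>z \<mapsto> [1 : z]\<close> of projective space.\<close>

definition proj_field :: "nat \<Rightarrow> cmat \<Rightarrow> nat \<Rightarrow> nat mpoly" where
  "proj_field n X j = Var j * row_form n X 1 - row_form n X (j+1)"

lemma pd_row_form:
  assumes "j \<in> {1..n}"
  shows "pd j (row_form n M r) = Const (M r (j+1))"
proof -
  have "pd j (row_form n M r) = (\<Sum>i=1..n. Const (M r (i+1)) * Const (if j = i then 1 else 0))"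
    by (simp add: row_form_split pd_add pd_sum pd_Const_mult pd_Var)
  also have "\<dots> = (\<Sum>i=1..n. if i = j then Const (M r (i+1)) else 0)"
    by (intro sum.cong) auto
  finally show ?thesis
    using assms by simp
qed

lemma tilde_eq: "tilde n X = - (\<Sum>j=1..n. subst pv (proj_field n X j) * qv j)"
proof -
  have Psi_eq: "Psi n a b = subst pv (hcoord a) * Psi_row1 n b" if "a \<in> {1..n+1}" for a b
    using that by (auto simp: Psi_def hcoord_def)
  have Psi_row1_first: "Psi_row1 n 1 = - (\<Sum>j=1..n. pv j * qv j)"
    and Psi_row1_shift: "\<And>j. j \<in> {1..n} \<Longrightarrow> Psi_row1 n (j+1) = qv j"
    by (simp_all add: Psi_row1_def)
  have "tilde n X = (\<Sum>a=1..n+1. subst pv (hcoord a) * Const (X 1 a) * Psi_row1 n 1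
      + (\<Sum>j=1..n. subst pv (hcoord a) * Const (X (j+1) a) * Psi_row1 n (j+1)))"
    unfolding tilde_def
  proof (intro sum.cong refl)
    fix a assume "a \<in> {1..n+1}"
    then show "(\<Sum>b=1..n+1. Psi n a b * Const (X b a))
        = subst pv (hcoord a) * Const (X 1 a) * Psi_row1 n 1
          + (\<Sum>j=1..n. subst pv (hcoord a) * Const (X (j+1) a) * Psi_row1 n (j+1))"
      unfolding sum_split_first sum_shift_from_2 by (simp add: Psi_eq algebra_simps)
  qed
  also have "\<dots> = (\<Sum>a=1..n+1. \<Sum>j=1..n. subst pv (hcoord a) * Const (X (j+1) a) * qv j
      - subst pv (hcoord a) * Const (X 1 a) * pv j * qv j)"
    by (intro sum.cong refl)
       (simp add: Psi_row1_first Psi_row1_shift sum_subtractf sum_distrib_left algebra_simps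
         del: One_nat_def cong: sum.cong_simp)
  also have "\<dots> = - (\<Sum>j=1..n. subst pv (proj_field n X j) * qv j)"
    by (subst sum.swap)
       (simp add: proj_field_def row_form_def subst_diff subst_mult subst_sum sum_subtractf
         sum_distrib_left sum_distrib_right algebra_simps flip: sum_negf)
  finally show ?thesis .
qed

lemma sum_pd_proj_field:
  assumes "X \<in> sl n"
  shows "(\<Sum>j=1..n. pd j (proj_field n X j)) = Const (of_nat n + 1) * row_form n X 1"
proof -
  have "(\<Sum>j=1..n. pd j (proj_field n X j))
      = (\<Sum>j=1..n. row_form n X 1 + Const (X 1 (j+1)) * Var j - Const (X (j+1) (j+1)))"
    by (intro sum.cong refl) (simp add: proj_field_def pd_diff pd_mult pd_Var pd_row_form)
  also have "\<dots> = of_nat n * row_form n X 1 + (row_form n X 1 - Const (X 1 1)) + Const (X 1 1)"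
    using sl_diag_sum_from_2[OF assms] row_form_split[of n X 1]
    unfolding sum_shift_from_2 by (simp add: sum.distrib sum_subtractf flip: Const_sum Const_uminus)
  also have "\<dots> = Const (of_nat n + 1) * row_form n X 1"
    by (simp add: Const_add Const_of_nat algebra_simps)
  finally show ?thesis .
qed

lemma rho_eq:
  assumes n: "1 \<le> n" and X: "X \<in> sl n"
  shows "rho n a X f = diff_op n (- Const (mA n a) * row_form n X 1) (proj_field n X) f"
proof -
  have "Const \<i> * W (tilde n X) f
      = (\<Sum>j=1..n. proj_field n X j * pd j f + Const (1/2) * pd j (proj_field n X j) * f)"
    by (simp add: tilde_eq W_uminus W_sum W_subst_pv_mult_qv sum_distrib_left Const_i_squared add.commute
        flip: sum_negf)
  also have "\<dots> = vec_field n (proj_field n X) f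
      + Const (1/2) * (\<Sum>j=1..n. pd j (proj_field n X j)) * f"
    by (simp add: vec_field_def sum.distrib sum_distrib_left sum_distrib_right mult.assoc)
  finally have W_tilde: "Const \<i> * W (tilde n X) f = vec_field n (proj_field n X) f
      + Const (1/2) * Const (of_nat n + 1) * row_form n X 1 * f"
    unfolding sum_pd_proj_field[OF X] by (simp add: mult.assoc)
  have "1/2 * (of_nat n + 1) + a/2 = - mA n a"
    by (simp add: mA_def field_simps)
  then have coeff: "Const (1/2) * Const (of_nat n + 1) + Const (a/2) = - Const (mA n a)"
    unfolding Const_mult[symmetric] Const_add[symmetric] Const_uminus[symmetric] by simp
  have "rho n a X f = Const \<i> * W (tilde n X) f + Const (a/2) * (row_form n X 1 * f)"
    by (simp add: rho_def W_add W_Const_mult phi1_eq[OF n X] W_subst_pv)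
  also have "\<dots> = diff_op n (- Const (mA n a) * row_form n X 1) (proj_field n X) f"
    unfolding W_tilde diff_op_def coeff[symmetric] by (simp add: algebra_simps)
  finally show ?thesis .
qed

section \<open>The representation\<close>

lemma Pspace_add: "f \<in> Pspace n \<Longrightarrow> g \<in> Pspace n \<Longrightarrow> f + g \<in> Pspace n"
  unfolding Pspace_def using Poly_Mapping.keys_add[of f g] by blast

lemma Pspace_0: "0 \<in> Pspace n"
  by (simp add: Pspace_def)

lemma Pspace_uminus:
  assumes "f \<in> Pspace n"
  shows "- f \<in> Pspace n"
proof -
  have "keys (- f) = keys f"
    by (auto simp: in_keys_iff)
  with assms show ?thesis
    by (simp add: Pspace_def)
qed

lemma Pspace_diff: "f \<in> Pspace n \<Longrightarrow> g \<in> Pspace n \<Longrightarrow> f - g \<in> Pspace n"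
  using Pspace_add[of f n "- g"] Pspace_uminus[of g n] by simp

lemma Pspace_mult:
  assumes f: "f \<in> Pspace n" and g: "g \<in> Pspace n"
  shows "f * g \<in> Pspace n"
proof -
  have "keys m \<subseteq> {1..n}" if m: "m \<in> keys (f * g)" for m
  proof -
    obtain a b where "m = a + b" "a \<in> keys f" "b \<in> keys g"
      using m Poly_Mapping.keys_mult[of f g] by blast
    then show ?thesis
      using Poly_Mapping.keys_add[of a b] f g unfolding Pspace_def by blast
  qed
  then show ?thesis
    by (simp add: Pspace_def)
qed

lemma Pspace_Const: "Const c \<in> Pspace n"
  by (simp add: Pspace_def Const_def)

lemma Pspace_Var: "k \<in> {1..n} \<Longrightarrow> Var k \<in> Pspace n"
  by (simp add: Pspace_def Var_def)

lemma Pspace_sum: "(\<And>x. x \<in> S \<Longrightarrow> g x \<in> Pspace n) \<Longrightarrow> (\<Sum>x\<in>S. g x) \<in> Pspace n"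
  by (induction S rule: infinite_finite_induct) (auto simp: Pspace_0 Pspace_add)

lemma Pspace_pd: "f \<in> Pspace n \<Longrightarrow> pd j f \<in> Pspace n"
  unfolding pd_def
proof (rule Pspace_sum)
  fix m assume "f \<in> Pspace n" and "m \<in> keys f"
  moreover have "keys (m - single j 1) \<subseteq> keys m"
    by (auto simp: in_keys_iff lookup_minus)
  ultimately show "single (m - single j 1) (lookup f m * of_nat (lookup m j)) \<in> Pspace n"
    by (auto simp: Pspace_def)
qed

lemma Pspace_hcoord:
  assumes "b \<in> {1..n+1}"
  shows "hcoord b \<in> Pspace n"
proof (cases "b = 1")
  case True
  then show ?thesis using Pspace_Const[of 1 n] by (simp add: hcoord_def)
next
  case False
  then have "b - 1 \<in> {1..n}"
    using assms by auto
  with False show ?thesis by (simp add: hcoord_def Pspace_Var)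
qed

lemma Pspace_row_form: "row_form n M r \<in> Pspace n"
  unfolding row_form_def by (intro Pspace_sum Pspace_mult Pspace_Const Pspace_hcoord)

lemma Pspace_diff_op:
  "c \<in> Pspace n \<Longrightarrow> (\<And>j. j \<in> {1..n} \<Longrightarrow> g j \<in> Pspace n) \<Longrightarrow> f \<in> Pspace n
    \<Longrightarrow> diff_op n c g f \<in> Pspace n"
  unfolding diff_op_def vec_field_def by (intro Pspace_add Pspace_mult Pspace_sum Pspace_pd) auto

lemma diff_op_cong:
  assumes "c = c'" and "\<And>j. j \<in> {1..n} \<Longrightarrow> g j = g' j"
  shows "diff_op n c g f = diff_op n c' g' f"
  using assms by (simp add: diff_op_def vec_field_def)

lemma vec_field_add: "vec_field n g (a + b) = vec_field n g a + vec_field n g b"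
  by (simp add: vec_field_def pd_add distrib_left sum.distrib)

lemma vec_field_diff: "vec_field n g (a - b) = vec_field n g a - vec_field n g b"
  by (simp add: vec_field_def pd_diff right_diff_distrib sum_subtractf)

lemma vec_field_mult: "vec_field n g (a * b) = vec_field n g a * b + a * vec_field n g b"
  by (simp add: vec_field_def pd_mult distrib_left sum.distrib sum_distrib_left sum_distrib_right
      algebra_simps)

lemma vec_field_Const_mult: "vec_field n g (Const c * h) = Const c * vec_field n g h"
  by (simp add: vec_field_def pd_Const_mult sum_distrib_left mult.left_commute)

lemma vec_field_Var:
  assumes "k \<in> {1..n}"
  shows "vec_field n g (Var k) = g k"
proof -
  have "vec_field n g (Var k) = (\<Sum>j=1..n. if j = k then g j else 0)"
    unfolding vec_field_def by (intro sum.cong) (simp_all add: pd_Var)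
  then show ?thesis
    using assms by simp
qed

text \<open>The second order parts cancel because partial derivatives commute.\<close>

lemma diff_op_commutator:
  "diff_op n c1 g1 (diff_op n c2 g2 f) - diff_op n c2 g2 (diff_op n c1 g1 f)
   = diff_op n (vec_field n g1 c2 - vec_field n g2 c1)
       (\<lambda>k. vec_field n g1 (g2 k) - vec_field n g2 (g1 k)) f"
proof -
  have compose: "vec_field n p (vec_field n q f)
      = (\<Sum>k=1..n. vec_field n p (q k) * pd k f) + (\<Sum>j=1..n. \<Sum>k=1..n. p j * q k * pd j (pd k f))"
    for p q
  proof -
    have "vec_field n p (vec_field n q f)
        = (\<Sum>j=1..n. \<Sum>k=1..n. p j * pd j (q k) * pd k f) + (\<Sum>j=1..n. \<Sum>k=1..n. p j * q k * pd j (pd k f))"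
      by (simp add: vec_field_def pd_sum pd_mult sum_distrib_left distrib_left mult.assoc sum.distrib)
    also have "(\<Sum>j=1..n. \<Sum>k=1..n. p j * pd j (q k) * pd k f) = (\<Sum>k=1..n. vec_field n p (q k) * pd k f)"
      by (subst sum.swap) (simp add: vec_field_def sum_distrib_right)
    finally show ?thesis .
  qed
  have second_order_symmetric:
    "(\<Sum>j=1..n. \<Sum>k=1..n. g1 j * g2 k * pd j (pd k f)) = (\<Sum>j=1..n. \<Sum>k=1..n. g2 j * g1 k * pd j (pd k f))"
    by (subst sum.swap) (simp add: pd_commute mult.commute)
  show ?thesis
    unfolding diff_op_def vec_field_add vec_field_mult compose second_order_symmetric
    by (simp add: vec_field_def left_diff_distrib sum_subtractf algebra_simps)
qed

lemma row_form_mmult: "(\<Sum>b=1..n+1. Const (Y r b) * row_form n X b) = row_form n (mmult n Y X) r"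
proof -
  have "(\<Sum>b=1..n+1. Const (Y r b) * row_form n X b)
      = (\<Sum>c=1..n+1. \<Sum>b=1..n+1. Const (Y r b * X b c) * hcoord c)"
    by (subst sum.swap) (simp add: row_form_def sum_distrib_left Const_mult mult.assoc)
  then show ?thesis
    by (simp add: row_form_def mmult_def Const_sum sum_distrib_right)
qed

lemma vec_field_proj_field_row_form:
  "vec_field n (proj_field n X) (row_form n Y r)
    = row_form n X 1 * row_form n Y r - row_form n (mmult n Y X) r"
proof -
  have "vec_field n (proj_field n X) (row_form n Y r)
      = (\<Sum>j=1..n. (Var j * row_form n X 1 - row_form n X (j+1)) * Const (Y r (j+1)))"
    unfolding vec_field_def proj_field_def by (intro sum.cong refl) (simp add: pd_row_form)
  also have "\<dots> = row_form n X 1 * (row_form n Y r - Const (Y r 1))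
      - ((\<Sum>b=1..n+1. Const (Y r b) * row_form n X b) - Const (Y r 1) * row_form n X 1)"
    unfolding row_form_split[of n Y r] sum_split_first[of _ n] sum_shift_from_2
    by (simp add: left_diff_distrib sum_subtractf sum_distrib_left algebra_simps)
  finally show ?thesis
    unfolding row_form_mmult by (simp add: algebra_simps)
qed

lemma rho_in_Pspace:
  assumes "1 \<le> n" and "X \<in> sl n" and "f \<in> Pspace n"
  shows "rho n a X f \<in> Pspace n"
  unfolding rho_eq[OF assms(1,2)] using assms(3)
  by (auto simp: proj_field_def
      intro!: Pspace_diff_op Pspace_mult Pspace_uminus Pspace_Const Pspace_row_form Pspace_diff Pspace_Var)

lemma rho_madd:
  assumes "1 \<le> n" and "X \<in> sl n" and "Y \<in> sl n"
  shows "rho n a (madd X Y) f = rho n a X f + rho n a Y f"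
  using assms
  by (simp add: rho_eq sl_madd diff_op_def vec_field_def proj_field_def row_form_madd algebra_simps
      flip: sum.distrib)

lemma rho_msmult:
  assumes "1 \<le> n" and "X \<in> sl n"
  shows "rho n a (msmult c X) f = Const c * rho n a X f"
  using assms
  by (simp add: rho_eq sl_msmult diff_op_def vec_field_def proj_field_def row_form_msmult
      sum_distrib_left algebra_simps)

lemma rho_add:
  assumes "1 \<le> n" and "X \<in> sl n"
  shows "rho n a X (f + g) = rho n a X f + rho n a X g"
  using assms by (simp add: rho_eq diff_op_def vec_field_add algebra_simps)

lemma rho_Const_mult:
  assumes "1 \<le> n" and "X \<in> sl n"
  shows "rho n a X (Const c * f) = Const c * rho n a X f"
  unfolding rho_eq[OF assms] diff_op_def vec_field_Const_mult by (simp add: algebra_simps)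

lemma rho_bracket:
  assumes n: "1 \<le> n" and X: "X \<in> sl n" and Y: "Y \<in> sl n"
  shows "rho n a (bracket n X Y) f = rho n a X (rho n a Y f) - rho n a Y (rho n a X f)"
proof -
  let ?c = "\<lambda>Z. - Const (mA n a) * row_form n Z 1"
  have coeff: "vec_field n (proj_field n X) (?c Y) - vec_field n (proj_field n Y) (?c X)
      = ?c (bracket n X Y)"
    by (simp add: vec_field_Const_mult vec_field_proj_field_row_form bracket_def row_form_msub
        algebra_simps flip: Const_uminus)
  have field: "vec_field n (proj_field n X) (proj_field n Y k) - vec_field n (proj_field n Y) (proj_field n X k)
      = proj_field n (bracket n X Y) k" if k: "k \<in> {1..n}" for k
    unfolding proj_field_def[of n Y k] proj_field_def[of n X k]
    by (simp add: vec_field_diff vec_field_mult vec_field_Var[OF k] vec_field_proj_field_row_form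
        proj_field_def bracket_def row_form_msub algebra_simps)
  have "rho n a X (rho n a Y f) - rho n a Y (rho n a X f)
      = diff_op n (?c X) (proj_field n X) (diff_op n (?c Y) (proj_field n Y) f)
        - diff_op n (?c Y) (proj_field n Y) (diff_op n (?c X) (proj_field n X) f)"
    by (simp only: rho_eq[OF n X] rho_eq[OF n Y])
  also have "\<dots> = diff_op n (?c (bracket n X Y)) (proj_field n (bracket n X Y)) f"
    unfolding diff_op_commutator coeff by (rule diff_op_cong) (simp_all add: field)
  also have "\<dots> = rho n a (bracket n X Y) f"
    by (simp only: rho_eq[OF n bracket_in_sl[OF X Y]])
  finally show ?thesis ..
qed

lemma rho_H:
  assumes n: "1 \<le> n" and k: "k \<in> {1..n}"
  shows "rho n a (H k) f = Const (mA n a) * f - Var k * pd k f - (\<Sum>j=1..n. Var j * pd j f)"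
proof -
  have H_sl: "H k \<in> sl n"
    unfolding H_def using k by (intro E_diff_in_sl) auto
  have first_row: "row_form n (H k) 1 = - 1"
  proof -
    have "row_form n (H k) 1 = Const (-1) * hcoord 1"
      by (rule row_form_unit_row) (use n k in \<open>auto simp: H_def msub_def E_def\<close>)
    then show ?thesis by (simp add: hcoord_def Const_uminus)
  qed
  have field: "proj_field n (H k) j = - Var j - (if j = k then Var k else 0)" if "j \<in> {1..n}" for j
  proof (cases "j = k")
    case True
    have "row_form n (H k) (j+1) = Const 1 * hcoord (k+1)"
      by (rule row_form_unit_row) (use k True in \<open>auto simp: H_def msub_def E_def\<close>)
    then show ?thesis using True k first_row by (simp add: proj_field_def hcoord_def)
  next
    case False
    have "row_form n (H k) (j+1) = 0"
      by (rule row_form_zero_row) (use False that in \<open>auto simp: H_def msub_def E_def\<close>)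
    then show ?thesis using False first_row by (simp add: proj_field_def)
  qed
  have "rho n a (H k) f = diff_op n (Const (mA n a)) (\<lambda>j. - Var j - (if j = k then Var k else 0)) f"
    unfolding rho_eq[OF n H_sl] by (rule diff_op_cong) (use first_row field in simp_all)
  also have "\<dots> = Const (mA n a) * f
      + (\<Sum>j=1..n. - (Var j * pd j f) - (if j = k then Var k * pd k f else 0))"
    unfolding diff_op_def vec_field_def by (intro arg_cong2[where f = plus] refl sum.cong) auto
  also have "\<dots> = Const (mA n a) * f - Var k * pd k f - (\<Sum>j=1..n. Var j * pd j f)"
    using k by (simp add: sum_subtractf sum_negf)
  finally show ?thesis .
qed

lemma rho_E_first_row:
  assumes n: "1 \<le> n" and k: "k \<in> {1..n}"
  shows "rho n a (E 1 (k+1)) f = - Const (mA n a) * Var k * f + Var k * (\<Sum>j=1..n. Var j * pd j f)"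
proof -
  have E_sl: "E 1 (k+1) \<in> sl n"
    using k by (intro E_in_sl) auto
  have first_row: "row_form n (E 1 (k+1)) 1 = Var k"
  proof -
    have "row_form n (E 1 (k+1)) 1 = Const 1 * hcoord (k+1)"
      by (rule row_form_unit_row) (use k in \<open>auto simp: E_def\<close>)
    then show ?thesis using k by (simp add: hcoord_def)
  qed
  have "row_form n (E 1 (k+1)) (j+1) = 0" if "j \<in> {1..n}" for j
    by (rule row_form_zero_row) (use that in \<open>simp add: E_def\<close>)
  then have "rho n a (E 1 (k+1)) f = diff_op n (- Const (mA n a) * Var k) (\<lambda>j. Var j * Var k) f"
    unfolding rho_eq[OF n E_sl] by (intro diff_op_cong) (use first_row in \<open>simp_all add: proj_field_def\<close>)
  then show ?thesis
    by (simp add: diff_op_def vec_field_def sum_distrib_left algebra_simps)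
qed

lemma rho_E_first_column:
  assumes n: "1 \<le> n" and k: "k \<in> {1..n}"
  shows "rho n a (E (k+1) 1) f = - pd k f"
proof -
  have E_sl: "E (k+1) 1 \<in> sl n"
    using k by (intro E_in_sl) auto
  have first_row: "row_form n (E (k+1) 1) 1 = 0"
    by (rule row_form_zero_row) (use k in \<open>auto simp: E_def\<close>)
  have field: "proj_field n (E (k+1) 1) j = - (if j = k then 1 else 0)" for j
  proof (cases "j = k")
    case True
    have "row_form n (E (k+1) 1) (j+1) = Const 1 * hcoord 1"
      by (rule row_form_unit_row) (use True in \<open>auto simp: E_def\<close>)
    then show ?thesis using True first_row by (simp add: proj_field_def hcoord_def)
  next
    case False
    have "row_form n (E (k+1) 1) (j+1) = 0"
      by (rule row_form_zero_row) (use False in \<open>auto simp: E_def\<close>)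
    then show ?thesis using False first_row by (simp add: proj_field_def)
  qed
  have "rho n a (E (k+1) 1) f = diff_op n 0 (\<lambda>j. - (if j = k then 1 else 0)) f"
    unfolding rho_eq[OF n E_sl] by (rule diff_op_cong) (use first_row field in simp_all)
  also have "\<dots> = (\<Sum>j=1..n. - (if j = k then pd k f else 0))"
    unfolding diff_op_def vec_field_def by (simp, intro sum.cong refl) auto
  also have "\<dots> = - pd k f"
    using k by (simp add: sum_negf)
  finally show ?thesis .
qed

lemma rho_E_off_diagonal:
  assumes n: "1 \<le> n" and i: "i \<in> {1..n}" and j: "j \<in> {1..n}" and "i \<noteq> j"
  shows "rho n a (E (i+1) (j+1)) f = - (Var j * pd i f)"
proof -
  have E_sl: "E (i+1) (j+1) \<in> sl n"
    using i j \<open>i \<noteq> j\<close> by (intro E_in_sl) auto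
  have first_row: "row_form n (E (i+1) (j+1)) 1 = 0"
    by (rule row_form_zero_row) (use i in \<open>auto simp: E_def\<close>)
  have field: "proj_field n (E (i+1) (j+1)) l = - (if l = i then Var j else 0)" for l
  proof (cases "l = i")
    case True
    have "row_form n (E (i+1) (j+1)) (l+1) = Const 1 * hcoord (j+1)"
      by (rule row_form_unit_row) (use True j in \<open>auto simp: E_def\<close>)
    then show ?thesis using True j first_row by (simp add: proj_field_def hcoord_def)
  next
    case False
    have "row_form n (E (i+1) (j+1)) (l+1) = 0"
      by (rule row_form_zero_row) (use False in \<open>auto simp: E_def\<close>)
    then show ?thesis using False first_row by (simp add: proj_field_def)
  qed
  have "rho n a (E (i+1) (j+1)) f = diff_op n 0 (\<lambda>l. - (if l = i then Var j else 0)) f"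
    unfolding rho_eq[OF n E_sl] by (rule diff_op_cong) (use first_row field in simp_all)
  also have "\<dots> = (\<Sum>l=1..n. - (if l = i then Var j * pd i f else 0))"
    unfolding diff_op_def vec_field_def by (simp, intro sum.cong refl) auto
  also have "\<dots> = - (Var j * pd i f)"
    using i by (simp add: sum_negf)
  finally show ?thesis .
qed

theorem proposition8p2:
  fixes n :: nat and a :: complex
  assumes "n \<ge> 1"
  shows
    "(\<forall>X\<in>sl n. \<forall>f\<in>Pspace n. rho n a X f \<in> Pspace n)
   \<and> (\<forall>X\<in>sl n. \<forall>Y\<in>sl n. \<forall>f\<in>Pspace n.
        rho n a (madd X Y) f = rho n a X f + rho n a Y f)
   \<and> (\<forall>X\<in>sl n. \<forall>c. \<forall>f\<in>Pspace n.
        rho n a (msmult c X) f = Const c * rho n a X f)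
   \<and> (\<forall>X\<in>sl n. \<forall>f\<in>Pspace n. \<forall>g\<in>Pspace n.
        rho n a X (f + g) = rho n a X f + rho n a X g)
   \<and> (\<forall>X\<in>sl n. \<forall>c. \<forall>f\<in>Pspace n.
        rho n a X (Const c * f) = Const c * rho n a X f)
   \<and> (\<forall>X\<in>sl n. \<forall>Y\<in>sl n. \<forall>f\<in>Pspace n.
        rho n a (bracket n X Y) f = rho n a X (rho n a Y f) - rho n a Y (rho n a X f))
   \<and> (\<forall>f\<in>Pspace n. \<forall>k\<in>{1..n}.
        rho n a (H k) f = Const (mA n a) * f - Var k * pd k f - (\<Sum>j=1..n. Var j * pd j f))
   \<and> (\<forall>f\<in>Pspace n. \<forall>k\<in>{1..n}.
        rho n a (E 1 (k+1)) f = - Const (mA n a) * Var k * f + Var k * (\<Sum>j=1..n. Var j * pd j f))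
   \<and> (\<forall>f\<in>Pspace n. \<forall>k\<in>{1..n}.
        rho n a (E (k+1) 1) f = - pd k f)
   \<and> (\<forall>f\<in>Pspace n. \<forall>i\<in>{1..n}. \<forall>j\<in>{1..n}. i \<noteq> j \<longrightarrow>
        rho n a (E (i+1) (j+1)) f = - (Var j * pd i f))"
  using assms
  by (intro conjI ballI allI impI rho_in_Pspace rho_madd rho_msmult rho_add rho_Const_mult rho_bracket
      rho_H rho_E_first_row rho_E_first_column rho_E_off_diagonal)

end
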